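(* Let $n\ge 1$ be an integer, suppose that $A\subseteq\mathbb{Z}_5^n$ is sum-free, and that $H<\mathbb{Z}_5^n$ is a maximal proper subgroup. If there is an $H$-coset $g+H$ with $|A\cap(g+H)|>\frac12|H|$, then $A$ has non-empty intersection with at most three $H$-cosets.
   Context: $\mathbb{Z}_5^n$ denotes the elementary abelian $5$-group of rank $n$. A subset $S$ of an abelian group is sum-free if there are no $x,y,z\in S$ (not necessarily distinct) with $x+y=z$. *)

theory Defs
  imports "HOL-Analysis.Analysis" "HOL-Library.Numeral_Type"
begin

text \<open>The elementary abelian 5-group of rank n is modelled as the type 5 ^ 'n
 (vectors over Z/5Z indexed by a finite type 'n with CARD('n) = n).\<close>

definition sum_free :: "'a::plus set \<Rightarrow> bool" where
  "sum_free S \<longleftrightarrow> (\<forall>x\<in>S. \<forall>y\<in>S. \<forall>z\<in>S. x + y \<noteq> z)"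

definition is_subgroup :: "'a::ab_group_add set \<Rightarrow> bool" where
  "is_subgroup H \<longleftrightarrow> 0 \<in> H \<and> (\<forall>x\<in>H. \<forall>y\<in>H. x + y \<in> H) \<and> (\<forall>x\<in>H. - x \<in> H)"

definition maximal_proper_subgroup :: "'a::ab_group_add set \<Rightarrow> bool" where
  "maximal_proper_subgroup H \<longleftrightarrow> is_subgroup H \<and> H \<noteq> UNIV \<and>
     (\<forall>K. is_subgroup K \<and> H \<subseteq> K \<longrightarrow> K = H \<or> K = UNIV)"

definition coset :: "'a::plus \<Rightarrow> 'a set \<Rightarrow> 'a set" where
  "coset g H = (\<lambda>h. g + h) ` H"

definition cosets :: "'a::plus set \<Rightarrow> 'a set set" where
  "cosets H = {coset g H | g. True}"

end

theory Submission
  imports Defs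
begin

text \<open>Let \<open>B = A \<inter> (g + H)\<close> with \<open>2 |B| > |H|\<close>. Any injective image of \<open>B\<close> inside
  \<open>g + H\<close> must meet \<open>B\<close>. For \<open>a \<in> A \<inter> H\<close> the translate \<open>a + B\<close> lies in \<open>g + H\<close>, and for
  \<open>x \<in> A \<inter> (2g + H)\<close> the reflection \<open>x - B\<close> does; either way sum-freeness is violated, so \<open>A\<close>
  avoids \<open>H\<close> and \<open>2g + H\<close>. In particular \<open>g \<notin> H\<close>, so by maximality \<open>H + \<int>g\<close> is the whole
  group and the cosets of \<open>H\<close> are \<open>jg + H\<close> for \<open>j = 0, \<dots>, 4\<close>. Only \<open>j = 1, 3, 4\<close> remain.\<close>

lemma is_subgroup_diff:
  "is_subgroup H \<Longrightarrow> x \<in> H \<Longrightarrow> y \<in> H \<Longrightarrow> x - y \<in> H"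
  unfolding is_subgroup_def by (metis diff_conv_add_uminus)

lemma mem_coset_iff:
  "is_subgroup H \<Longrightarrow> x \<in> coset g H \<longleftrightarrow> x - g \<in> H"
  unfolding coset_def by (auto simp: image_iff intro!: bexI[of _ "x - g"])

lemma coset_eqI:
  assumes "is_subgroup H" "x - y \<in> H"
  shows "coset x H = coset y H"
proof -
  have "z - y \<in> H \<longleftrightarrow> z - x \<in> H" for z
  proof -
    have "z - y = (z - x) + (x - y)" "z - x = (z - y) - (x - y)" by simp_all
    then show ?thesis
      using assms is_subgroup_diff[OF assms(1)] unfolding is_subgroup_def by metis
  qed
  then show ?thesis
    using mem_coset_iff[OF assms(1)] by blast
qed

lemma coset_zero: "coset 0 (H :: 'a::monoid_add set) = H"
  by (auto simp: coset_def)

lemma card_coset: "card (coset (g::'a::ab_group_add) H) = card H"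
  unfolding coset_def by (rule card_image) (simp add: inj_on_def)

lemma large_subset_meets_inj_image:
  assumes "finite C" "B \<subseteq> C" "card C < 2 * card B" "inj_on f B" "f ` B \<subseteq> C"
  shows "\<exists>b\<in>B. f b \<in> B"
proof (rule ccontr)
  assume "\<not> ?thesis"
  then have "f ` B \<inter> B = {}" by blast
  moreover have "finite B" using assms(1,2) finite_subset by blast
  ultimately have "card (f ` B \<union> B) = card (f ` B) + card B"
    by (simp add: card_Un_disjoint)
  also have "\<dots> = 2 * card B" by (simp add: card_image[OF assms(4)])
  moreover have "card (f ` B \<union> B) \<le> card C"
    using assms by (intro card_mono) auto
  ultimately show False using assms(3) by linarith
qed

context
  fixes A H :: "'a::ab_group_add set" and g :: 'a
  assumes sum_free: "sum_free A"
    and subgroup: "is_subgroup H"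
    and finite: "finite H"
    and large: "card H < 2 * card (A \<inter> coset g H)"
begin

lemma sum_free_large_coset_meets_inj_image:
  assumes "inj_on f (A \<inter> coset g H)" "f ` (A \<inter> coset g H) \<subseteq> coset g H"
  shows "\<exists>b\<in>A \<inter> coset g H. f b \<in> A \<inter> coset g H"
proof -
  have "finite (coset g H)" unfolding coset_def using finite by simp
  then show ?thesis
    using large_subset_meets_inj_image[OF _ Int_lower2 _ assms] large by (simp add: card_coset)
qed

lemma sum_free_large_coset_disjoint_subgroup: "A \<inter> H = {}"
proof (rule ccontr)
  assume "A \<inter> H \<noteq> {}"
  then obtain a where a: "a \<in> A" "a \<in> H" by blast
  have "(\<lambda>b. a + b) ` (A \<inter> coset g H) \<subseteq> coset g H"
  proof
    fix y assume "y \<in> (\<lambda>b. a + b) ` (A \<inter> coset g H)"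
    then obtain b where "b - g \<in> H" "y - g = a + (b - g)"
      using mem_coset_iff[OF subgroup] by (force simp: algebra_simps)
    then show "y \<in> coset g H"
      using a subgroup mem_coset_iff[OF subgroup] unfolding is_subgroup_def by metis
  qed
  then obtain b where "b \<in> A" "a + b \<in> A"
    using sum_free_large_coset_meets_inj_image[of "\<lambda>b. a + b"] by auto
  then show False using a sum_free unfolding sum_free_def by blast
qed

lemma sum_free_large_coset_disjoint_double: "A \<inter> coset (g + g) H = {}"
proof (rule ccontr)
  assume "A \<inter> coset (g + g) H \<noteq> {}"
  then obtain x where x: "x \<in> A" "x - (g + g) \<in> H"
    using mem_coset_iff[OF subgroup] by blast
  have "(\<lambda>b. x - b) ` (A \<inter> coset g H) \<subseteq> coset g H"
  proof
    fix y assume "y \<in> (\<lambda>b. x - b) ` (A \<inter> coset g H)"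
    then obtain b where "b - g \<in> H" "y - g = (x - (g + g)) - (b - g)"
      using mem_coset_iff[OF subgroup] by (force simp: algebra_simps)
    then show "y \<in> coset g H"
      using x is_subgroup_diff[OF subgroup] mem_coset_iff[OF subgroup] by metis
  qed
  moreover have "inj_on (\<lambda>b. x - b) (A \<inter> coset g H)"
    by (simp add: inj_on_def)
  ultimately obtain b where "b \<in> A" "x - b \<in> A"
    using sum_free_large_coset_meets_inj_image by blast
  then show False using x sum_free unfolding sum_free_def by (metis diff_add_cancel)
qed

lemma sum_free_large_coset_not_subgroup: "g \<notin> H"
proof
  assume "g \<in> H"
  have "A \<inter> coset g H \<noteq> {}" using large by auto
  then obtain b where "b \<in> A" "b - g \<in> H"
    using mem_coset_iff[OF subgroup] by blast
  then have "(b - g) + g \<in> H"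
    using \<open>g \<in> H\<close> subgroup unfolding is_subgroup_def by blast
  then have "b \<in> A \<inter> H" using \<open>b \<in> A\<close> by simp
  then show False using sum_free_large_coset_disjoint_subgroup by blast
qed

end

lemma maximal_proper_subgroup_int_span:
  fixes H :: "'a::ring_1 set"
  assumes "maximal_proper_subgroup H" "g \<notin> H"
  shows "\<exists>k::int. x - of_int k * g \<in> H"
proof -
  define K where "K = {y. \<exists>k::int. y - of_int k * g \<in> H}"
  have H: "is_subgroup H" using assms(1) unfolding maximal_proper_subgroup_def by blast
  have "is_subgroup K"
    unfolding is_subgroup_def
  proof (intro conjI ballI)
    show "0 \<in> K" unfolding K_def using H by (auto simp: is_subgroup_def intro: exI[of _ 0])
  next
    fix y z assume "y \<in> K" "z \<in> K"
    then obtain k l where "y - of_int k * g \<in> H" "z - of_int l * g \<in> H" unfolding K_def by blast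
    then have "(y - of_int k * g) + (z - of_int l * g) \<in> H" using H by (simp add: is_subgroup_def)
    then have "y + z - of_int (k + l) * g \<in> H" by (simp add: algebra_simps)
    then show "y + z \<in> K" unfolding K_def by blast
  next
    fix y assume "y \<in> K"
    then obtain k where "y - of_int k * g \<in> H" unfolding K_def by blast
    then have "- (y - of_int k * g) \<in> H" using H unfolding is_subgroup_def by blast
    then have "- y - of_int (- k) * g \<in> H" by (simp add: algebra_simps)
    then show "- y \<in> K" unfolding K_def by blast
  qed
  moreover have "H \<subseteq> K" unfolding K_def by (auto intro: exI[of _ 0])
  moreover have "g \<in> K" unfolding K_def using H by (auto simp: is_subgroup_def intro: exI[of _ 1])
  ultimately have "K = UNIV"
    using assms unfolding maximal_proper_subgroup_def by blast
  then show ?thesis unfolding K_def by blast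
qed

lemma of_int_mod_5_mult: "of_int (k mod 5) * (g::5 ^ 'n) = of_int k * g"
proof -
  have "(5::5 ^ 'n) = 0" by (simp add: vec_eq_iff)
  then have "of_int (5 * (k div 5)) * g = 0" by simp
  moreover have "of_int k * g = of_int (5 * (k div 5)) * g + of_int (k mod 5) * g"
    by (simp only: distrib_right[symmetric] of_int_add[symmetric] mult_div_mod_eq)
  ultimately show ?thesis by simp
qed

lemma maximal_proper_subgroup_cosets_5:
  fixes H :: "(5 ^ 'n) set"
  assumes "maximal_proper_subgroup H" "g \<notin> H"
  shows "\<exists>j\<in>{0..4::int}. x \<in> coset (of_int j * g) H"
proof -
  have H: "is_subgroup H" using assms(1) unfolding maximal_proper_subgroup_def by blast
  obtain k :: int where "x - of_int k * g \<in> H"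
    using maximal_proper_subgroup_int_span[OF assms] by blast
  then have "x \<in> coset (of_int (k mod 5) * g) H"
    by (simp add: mem_coset_iff[OF H] of_int_mod_5_mult)
  moreover have "k mod 5 \<in> {0..4}" by auto
  ultimately show ?thesis by blast
qed

lemma card_cosets_meeting_le:
  assumes "is_subgroup H" "finite J" "A \<subseteq> (\<Union>j\<in>J. coset (f j) H)"
  shows "card {C \<in> cosets H. A \<inter> C \<noteq> {}} \<le> card J"
proof -
  have "{C \<in> cosets H. A \<inter> C \<noteq> {}} \<subseteq> (\<lambda>j. coset (f j) H) ` J"
  proof
    fix C assume "C \<in> {C \<in> cosets H. A \<inter> C \<noteq> {}}"
    then obtain y x where C: "C = coset y H" and x: "x \<in> A" "x \<in> C"
      unfolding cosets_def by blast
    obtain j where "j \<in> J" "x - f j \<in> H"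
      using x(1) assms(3) mem_coset_iff[OF assms(1)] by blast
    moreover have "x - y \<in> H" using x C mem_coset_iff[OF assms(1)] by blast
    ultimately have "C = coset (f j) H"
      using C coset_eqI[OF assms(1)] by metis
    then show "C \<in> (\<lambda>j. coset (f j) H) ` J" using \<open>j \<in> J\<close> by blast
  qed
  then show ?thesis
    using assms(2) by (meson card_image_le card_mono finite_imageI le_trans)
qed

lemma sum_free_large_coset_subset_cosets_5:
  fixes A H :: "(5 ^ 'n) set"
  assumes "sum_free A" "maximal_proper_subgroup H" "card H < 2 * card (A \<inter> coset g H)"
  shows "A \<subseteq> (\<Union>j\<in>{1, 3, 4::int}. coset (of_int j * g) H)"
proof
  fix x assume "x \<in> A"
  have H: "is_subgroup H" using assms(2) unfolding maximal_proper_subgroup_def by blast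
  note large_coset = assms(1) H finite assms(3)
  obtain j where j: "j \<in> {0..4}" "x \<in> coset (of_int j * g) H"
    using maximal_proper_subgroup_cosets_5[OF assms(2) sum_free_large_coset_not_subgroup[OF large_coset]]
    by blast
  have "j \<noteq> 0" using j \<open>x \<in> A\<close> sum_free_large_coset_disjoint_subgroup[OF large_coset]
    by (auto simp: coset_zero)
  moreover have "j \<noteq> 2" using j \<open>x \<in> A\<close> sum_free_large_coset_disjoint_double[OF large_coset]
    by (auto simp: distrib_right)
  ultimately have "j \<in> {1, 3, 4}" using j(1) by auto
  then show "x \<in> (\<Union>j\<in>{1, 3, 4}. coset (of_int j * g) H)" using j(2) by blast
qed

theorem proposition2:
  fixes A H :: "(5 ^ 'n) set"
  assumes "sum_free A"
    and "maximal_proper_subgroup H"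
    and "\<exists>g. real (card (A \<inter> coset g H)) > real (card H) / 2"
  shows "card {C \<in> cosets H. A \<inter> C \<noteq> {}} \<le> 3"
proof -
  have H: "is_subgroup H" using assms(2) unfolding maximal_proper_subgroup_def by blast
  obtain g where "real (card (A \<inter> coset g H)) > real (card H) / 2"
    using assms(3) by blast
  then have "real (card H) < real (2 * card (A \<inter> coset g H))"
    by simp
  then have "card H < 2 * card (A \<inter> coset g H)"
    by (simp only: of_nat_less_iff)
  then have "A \<subseteq> (\<Union>j\<in>{1, 3, 4::int}. coset (of_int j * g) H)"
    using sum_free_large_coset_subset_cosets_5 assms(1,2) by blast
  then have "card {C \<in> cosets H. A \<inter> C \<noteq> {}} \<le> card {1, 3, 4::int}"
    by (rule card_cosets_meeting_le[OF H, rotated]) simp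
  also have "card {1, 3, 4::int} = 3" by simp
  finally show ?thesis .
qed

end
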